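(* Let $\nu\ge0$, $\epsilon\in\{0,1\}$ and let $\zeta$ be a real parameter with $1+\zeta\nu^2\neq0$. Then the equation $$-2\nu^2U_XU_{XX}+3\epsilon U_XU-\nu^2U_{XXX}U+\tfrac23U_{XXX}-\tfrac23\nu^{5/2}U_{XXX}+\epsilon U_T-\nu^2U_{XXT}=0\qquad(E_{\nu,\epsilon})$$ describes pseudo-spherical surfaces with associated one-forms $\omega^i=f_{i1}dX+f_{i2}dT$, where $f_{11}=\frac13\epsilon\zeta+\frac13\sqrt\nu\,\epsilon+\nu^2U_{XX}-\epsilon U+\frac{3}{4(1+\zeta\nu^2)}$, $f_{12}=\frac23(1-\nu^{5/2})U_{XX}+\frac\epsilon3(\zeta+\sqrt\nu)U+\epsilon U^2-\nu^2UU_{XX}-\frac29\epsilon(\zeta^2+2\sqrt\nu\zeta+\nu)-\frac{1}{2(1+\zeta\nu^2)}\big(\tfrac32U+\zeta+\sqrt\nu\big)$, $f_{21}=0$, $f_{22}=-U_X$, $f_{31}=-\frac13\epsilon\zeta-\frac13\sqrt\nu\,\epsilon-\nu^2U_{XX}+\epsilon U+\frac{3}{4(1+\zeta\nu^2)}$, $f_{32}=-\frac23(1-\nu^{5/2})U_{XX}-\frac\epsilon3(\zeta+\sqrt\nu)U-\epsilon U^2+\nu^2UU_{XX}+\frac29\epsilon(\zeta^2+2\sqrt\nu\zeta+\nu)-\frac{1}{2(1+\zeta\nu^2)}\big(\tfrac32U+\zeta+\sqrt\nu\big)$. That is, for every smooth solution $U$ the pulled-back forms satisfy $d\omega^1=\omega^3\wedge\omega^2$,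 $d\omega^2=\omega^1\wedge\omega^3$, $d\omega^3=\omega^1\wedge\omega^2$.
   Context: An equation describes pseudo-spherical surfaces if there are one-forms $\omega^i=f_{i1}dX+f_{i2}dT\neq0$ ($i=1,2,3$), with coefficients smooth functions of the independent variables, $U$ and finitely many derivatives of $U$, whose pullbacks by any solution satisfy the three structure equations $d\omega^1=\omega^3\wedge\omega^2$, $d\omega^2=\omega^1\wedge\omega^3$, $d\omega^3=\omega^1\wedge\omega^2$. *)

theory Defs
  imports "HOL-Analysis.Analysis"
begin

definition px :: "(real \<Rightarrow> real \<Rightarrow> real) \<Rightarrow> real \<Rightarrow> real \<Rightarrow> real" where
  "px F x t = deriv (\<lambda>y. F y t) x"

definition pt :: "(real \<Rightarrow> real \<Rightarrow> real) \<Rightarrow> real \<Rightarrow> real \<Rightarrow> real" where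
  "pt F x t = deriv (\<lambda>s. F x s) t"

text \<open>Iterated partial derivatives: True = d/dX, False = d/dT (applied right to left).\<close>
fun pd :: "bool list \<Rightarrow> (real \<Rightarrow> real \<Rightarrow> real) \<Rightarrow> real \<Rightarrow> real \<Rightarrow> real" where
  "pd [] F = F"
| "pd (b # ds) F = (if b then px (pd ds F) else pt (pd ds F))"

definition smooth_on2 :: "(real \<times> real) set \<Rightarrow> (real \<Rightarrow> real \<Rightarrow> real) \<Rightarrow> bool" where
  "smooth_on2 S F \<longleftrightarrow>
     (\<forall>ds. \<forall>(x,t)\<in>S. (\<lambda>y. pd ds F y t) differentiable (at x)
                   \<and> (\<lambda>s. pd ds F x s) differentiable (at t))
   \<and> (\<forall>ds. continuous_on S (\<lambda>(x,t). pd ds F x t))"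

text \<open>Structure equations for the one-forms w_i = a_i dX + b_i dT on S:
  d w1 = w3 /\ w2, d w2 = w1 /\ w3, d w3 = w1 /\ w2,
  where d(a dX + b dT) = (b_X - a_T) dX/\dT and
  (a dX + b dT)/\(c dX + e dT) = (a e - b c) dX/\dT.\<close>
definition structure_eqs ::
  "(real \<times> real) set \<Rightarrow> (real \<Rightarrow> real \<Rightarrow> real) \<Rightarrow> (real \<Rightarrow> real \<Rightarrow> real) \<Rightarrow>
   (real \<Rightarrow> real \<Rightarrow> real) \<Rightarrow> (real \<Rightarrow> real \<Rightarrow> real) \<Rightarrow>
   (real \<Rightarrow> real \<Rightarrow> real) \<Rightarrow> (real \<Rightarrow> real \<Rightarrow> real) \<Rightarrow> bool" where
  "structure_eqs S a1 b1 a2 b2 a3 b3 \<longleftrightarrow>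
     (\<forall>(x,t)\<in>S.
        px b1 x t - pt a1 x t = a3 x t * b2 x t - b3 x t * a2 x t
      \<and> px b2 x t - pt a2 x t = a1 x t * b3 x t - b1 x t * a3 x t
      \<and> px b3 x t - pt a3 x t = a1 x t * b2 x t - b1 x t * a2 x t)"

text \<open>Coefficients f_ij as functions of the parameters (nu, eps, zeta) and of the
  jet variables u = U, ux = U_X, uxx = U_XX.\<close>
definition f11 :: "real \<Rightarrow> real \<Rightarrow> real \<Rightarrow> real \<Rightarrow> real \<Rightarrow> real \<Rightarrow> real" where
  "f11 nu eps zeta u ux uxx =
     1/3 * eps * zeta + 1/3 * sqrt nu * eps + nu^2 * uxx - eps * u + 3 / (4 * (1 + zeta * nu^2))"

definition f12 :: "real \<Rightarrow> real \<Rightarrow> real \<Rightarrow> real \<Rightarrow> real \<Rightarrow> real \<Rightarrow> real" where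
  "f12 nu eps zeta u ux uxx =
     2/3 * (1 - nu powr (5/2)) * uxx + eps/3 * (zeta + sqrt nu) * u + eps * u^2
     - nu^2 * u * uxx - 2/9 * eps * (zeta^2 + 2 * sqrt nu * zeta + nu)
     - 1 / (2 * (1 + zeta * nu^2)) * (3/2 * u + zeta + sqrt nu)"

definition f21 :: "real \<Rightarrow> real \<Rightarrow> real \<Rightarrow> real \<Rightarrow> real \<Rightarrow> real \<Rightarrow> real" where
  "f21 nu eps zeta u ux uxx = 0"

definition f22 :: "real \<Rightarrow> real \<Rightarrow> real \<Rightarrow> real \<Rightarrow> real \<Rightarrow> real \<Rightarrow> real" where
  "f22 nu eps zeta u ux uxx = - ux"

definition f31 :: "real \<Rightarrow> real \<Rightarrow> real \<Rightarrow> real \<Rightarrow> real \<Rightarrow> real \<Rightarrow> real" where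
  "f31 nu eps zeta u ux uxx =
     - 1/3 * eps * zeta - 1/3 * sqrt nu * eps - nu^2 * uxx + eps * u + 3 / (4 * (1 + zeta * nu^2))"

definition f32 :: "real \<Rightarrow> real \<Rightarrow> real \<Rightarrow> real \<Rightarrow> real \<Rightarrow> real \<Rightarrow> real" where
  "f32 nu eps zeta u ux uxx =
     - 2/3 * (1 - nu powr (5/2)) * uxx - eps/3 * (zeta + sqrt nu) * u - eps * u^2
     + nu^2 * u * uxx + 2/9 * eps * (zeta^2 + 2 * sqrt nu * zeta + nu)
     - 1 / (2 * (1 + zeta * nu^2)) * (3/2 * u + zeta + sqrt nu)"

definition eqE :: "real \<Rightarrow> real \<Rightarrow> (real \<Rightarrow> real \<Rightarrow> real) \<Rightarrow> real \<Rightarrow> real \<Rightarrow> bool" where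
  "eqE nu eps U x t \<longleftrightarrow>
     (let u = U x t; ux = px U x t; uxx = px (px U) x t; uxxx = px (px (px U)) x t;
          ut = pt U x t; uxxt = pt (px (px U)) x t in
      - 2 * nu^2 * ux * uxx + 3 * eps * ux * u - nu^2 * uxxx * u + 2/3 * uxxx
      - 2/3 * nu powr (5/2) * uxxx + eps * ut - nu^2 * uxxt = 0)"

definition pull ::
  "(real \<Rightarrow> real \<Rightarrow> real \<Rightarrow> real \<Rightarrow> real \<Rightarrow> real \<Rightarrow> real) \<Rightarrow> real \<Rightarrow> real \<Rightarrow> real \<Rightarrow>
   (real \<Rightarrow> real \<Rightarrow> real) \<Rightarrow> real \<Rightarrow> real \<Rightarrow> real" where
  "pull f nu eps zeta U x t = f nu eps zeta (U x t) (px U x t) (px (px U) x t)"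

end

theory Submission
  imports Defs
begin

text \<open>With K = 1/(2(1 + \<zeta>\<nu>^2)), \<gamma> = 3U/2 + \<zeta> + \<surd>\<nu> and suitable \<alpha>, \<beta> polynomial in U, U_XX,
  the forms are \<omega>1 = (3K/2 + \<alpha>) dX + (\<beta> - K\<gamma>) dT, \<omega>3 = (3K/2 - \<alpha>) dX + (-\<beta> - K\<gamma>) dT and
  \<omega>2 = -U_X dT. Since K\<gamma>_X = (3K/2) U_X, the equations for d\<omega>1 and d\<omega>3 both reduce to
  \<beta>_X - \<alpha>_T = \<alpha> U_X, which is the equation itself; the one for d\<omega>2 reduces to the algebraic
  identity \<alpha>\<gamma> + 3\<beta>/2 = (1 + \<zeta>\<nu>^2) U_XX, which uses \<surd>\<nu>^2 = \<nu> and \<nu>^(5/2) = \<nu>^2 \<surd>\<nu>.\<close>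

lemma powr_five_halves:
  fixes nu :: real
  assumes "nu \<ge> 0"
  shows "nu powr (5/2) = nu^2 * sqrt nu"
proof (cases "nu = 0")
  case False
  then have "0 < nu" using assms by simp
  have "nu powr (5/2) = nu powr 2 * nu powr (1/2)"
    by (simp flip: powr_add)
  also have "\<dots> = nu^2 * sqrt nu"
    using \<open>0 < nu\<close> by (simp add: powr_half_sqrt)
  finally show ?thesis .
qed simp

lemma smooth_on2_DERIV_px:
  assumes "smooth_on2 S F" and "(x, t) \<in> S"
  shows "((\<lambda>y. pd ds F y t) has_real_derivative px (pd ds F) x t) (at x)"
  using assms unfolding smooth_on2_def px_def
  by (fastforce simp: DERIV_deriv_iff_real_differentiable)

lemma smooth_on2_DERIV_pt:
  assumes "smooth_on2 S F" and "(x, t) \<in> S"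
  shows "((\<lambda>s. pd ds F x s) has_real_derivative pt (pd ds F) x t) (at t)"
  using assms unfolding smooth_on2_def pt_def
  by (fastforce simp: DERIV_deriv_iff_real_differentiable)

lemma px_pull:
  "px (pull f nu eps zeta U) x t = deriv (\<lambda>y. f nu eps zeta (U y t) (px U y t) (px (px U) y t)) x"
  unfolding pull_def by (simp add: px_def[of "\<lambda>x t. f nu eps zeta (U x t) (px U x t) (px (px U) x t)"])

lemma pt_pull:
  "pt (pull f nu eps zeta U) x t = deriv (\<lambda>s. f nu eps zeta (U x s) (px U x s) (px (px U) x s)) t"
  by (simp add: pull_def pt_def)

lemma deriv_f11_comp:
  assumes "(a has_real_derivative a') (at x)" and "(c has_real_derivative c') (at x)"
  shows "deriv (\<lambda>y. f11 nu eps zeta (a y) (b y) (c y)) x = nu^2 * c' - eps * a'"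
  unfolding f11_def by (rule DERIV_imp_deriv) (use assms in \<open>auto intro!: derivative_eq_intros\<close>)

lemma deriv_f12_comp:
  assumes "(a has_real_derivative a') (at x)" and "(c has_real_derivative c') (at x)"
  shows "deriv (\<lambda>y. f12 nu eps zeta (a y) (b y) (c y)) x =
    2/3 * (1 - nu powr (5/2)) * c' + eps/3 * (zeta + sqrt nu) * a' + 2 * eps * a x * a'
    - nu^2 * (a' * c x + a x * c') - 1 / (2 * (1 + zeta * nu^2)) * (3/2 * a')"
proof -
  define K where "K = 1 / (2 * (1 + zeta * nu^2))"
  show ?thesis
    unfolding f12_def K_def[symmetric]
    by (rule DERIV_imp_deriv) (use assms in \<open>auto intro!: derivative_eq_intros simp: algebra_simps\<close>)
qed

lemma deriv_f22_comp:
  assumes "(b has_real_derivative b') (at x)"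
  shows "deriv (\<lambda>y. f22 nu eps zeta (a y) (b y) (c y)) x = - b'"
  unfolding f22_def by (rule DERIV_imp_deriv) (use assms in \<open>auto intro!: derivative_eq_intros\<close>)

lemma deriv_f31_comp:
  assumes "(a has_real_derivative a') (at x)" and "(c has_real_derivative c') (at x)"
  shows "deriv (\<lambda>y. f31 nu eps zeta (a y) (b y) (c y)) x = eps * a' - nu^2 * c'"
  unfolding f31_def by (rule DERIV_imp_deriv) (use assms in \<open>auto intro!: derivative_eq_intros\<close>)

lemma deriv_f32_comp:
  assumes "(a has_real_derivative a') (at x)" and "(c has_real_derivative c') (at x)"
  shows "deriv (\<lambda>y. f32 nu eps zeta (a y) (b y) (c y)) x =
    - 2/3 * (1 - nu powr (5/2)) * c' - eps/3 * (zeta + sqrt nu) * a' - 2 * eps * a x * a'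
    + nu^2 * (a' * c x + a x * c') - 1 / (2 * (1 + zeta * nu^2)) * (3/2 * a')"
proof -
  define K where "K = 1 / (2 * (1 + zeta * nu^2))"
  show ?thesis
    unfolding f32_def K_def[symmetric]
    by (rule DERIV_imp_deriv) (use assms in \<open>auto intro!: derivative_eq_intros simp: algebra_simps\<close>)
qed

lemma f11_f32_minus_f12_f31:
  fixes nu eps zeta u ux uxx :: real
  assumes nu: "nu \<ge> 0" and nz: "1 + zeta * nu^2 \<noteq> 0"
  shows "f11 nu eps zeta u ux uxx * f32 nu eps zeta u ux uxx
       - f12 nu eps zeta u ux uxx * f31 nu eps zeta u ux uxx = - uxx"
proof -
  define K where "K = 1 / (2 * (1 + zeta * nu^2))"
  define \<alpha> where "\<alpha> = eps/3 * (zeta + sqrt nu) + nu^2 * uxx - eps * u"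
  define \<beta> where "\<beta> = 2/3 * (1 - nu powr (5/2)) * uxx + eps/3 * (zeta + sqrt nu) * u + eps * u^2
    - nu^2 * u * uxx - 2/9 * eps * (zeta^2 + 2 * sqrt nu * zeta + nu)"
  define \<gamma> where "\<gamma> = 3/2 * u + zeta + sqrt nu"
  have decomposition: "f11 nu eps zeta u ux uxx = 3/2 * K + \<alpha>" "f31 nu eps zeta u ux uxx = 3/2 * K - \<alpha>"
    "f12 nu eps zeta u ux uxx = \<beta> - K * \<gamma>" "f32 nu eps zeta u ux uxx = - \<beta> - K * \<gamma>"
    unfolding f11_def f12_def f31_def f32_def K_def \<alpha>_def \<beta>_def \<gamma>_def by (simp_all add: field_simps)
  have "f11 nu eps zeta u ux uxx * f32 nu eps zeta u ux uxx
       - f12 nu eps zeta u ux uxx * f31 nu eps zeta u ux uxx = - 2 * K * (\<alpha> * \<gamma> + 3/2 * \<beta>)"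
    unfolding decomposition by (simp add: field_simps)
  also have "\<alpha> * \<gamma> + 3/2 * \<beta> = (1 + zeta * nu^2) * uxx"
    unfolding \<alpha>_def \<beta>_def \<gamma>_def powr_five_halves[OF nu]
    using nu by (simp add: field_simps power2_eq_square)
  also have "- 2 * K * ((1 + zeta * nu^2) * uxx) = - uxx"
    using nz by (simp add: K_def divide_simps)
  finally show ?thesis .
qed

text \<open>In jet coordinates (uxxx = U_XXX, ut = U_T, uxxt = U_XXT) the left-hand sides below are
  D_X f12 - D_T f11 and D_X f32 - D_T f31, as computed by the chain rule lemmas above.\<close>

lemma structure_eq1_jet_iff:
  fixes nu eps zeta u ux uxx uxxx ut uxxt :: real
  shows "(2/3 * (1 - nu powr (5/2)) * uxxx + eps/3 * (zeta + sqrt nu) * ux + 2 * eps * u * ux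
          - nu^2 * (ux * uxx + u * uxxx) - 1 / (2 * (1 + zeta * nu^2)) * (3/2 * ux))
        - (nu^2 * uxxt - eps * ut)
       = f31 nu eps zeta u ux uxx * f22 nu eps zeta u ux uxx
       - f32 nu eps zeta u ux uxx * f21 nu eps zeta u ux uxx
     \<longleftrightarrow> - 2 * nu^2 * ux * uxx + 3 * eps * ux * u - nu^2 * uxxx * u + 2/3 * uxxx
      - 2/3 * nu powr (5/2) * uxxx + eps * ut - nu^2 * uxxt = 0"
proof -
  have "3 / (4 * (1 + zeta * nu^2)) = 1 / (2 * (1 + zeta * nu^2)) * (3/2)"
    by simp
  then show ?thesis
    unfolding f21_def f22_def f31_def by (simp add: algebra_simps) argo
qed

lemma structure_eq3_jet_iff:
  fixes nu eps zeta u ux uxx uxxx ut uxxt :: real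
  shows "(- 2/3 * (1 - nu powr (5/2)) * uxxx - eps/3 * (zeta + sqrt nu) * ux - 2 * eps * u * ux
          + nu^2 * (ux * uxx + u * uxxx) - 1 / (2 * (1 + zeta * nu^2)) * (3/2 * ux))
        - (eps * ut - nu^2 * uxxt)
       = f11 nu eps zeta u ux uxx * f22 nu eps zeta u ux uxx
       - f12 nu eps zeta u ux uxx * f21 nu eps zeta u ux uxx
     \<longleftrightarrow> - 2 * nu^2 * ux * uxx + 3 * eps * ux * u - nu^2 * uxxx * u + 2/3 * uxxx
      - 2/3 * nu powr (5/2) * uxxx + eps * ut - nu^2 * uxxt = 0"
proof -
  have "3 / (4 * (1 + zeta * nu^2)) = 1 / (2 * (1 + zeta * nu^2)) * (3/2)"
    by simp
  then show ?thesis
    unfolding f11_def f21_def f22_def by (simp add: algebra_simps) argo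
qed

lemma structure_eqs_pull_solution:
  assumes nu: "nu \<ge> 0" and nz: "1 + zeta * nu^2 \<noteq> 0"
    and U: "smooth_on2 S U" and E: "\<forall>(x, t)\<in>S. eqE nu eps U x t"
  shows "structure_eqs S
           (pull f11 nu eps zeta U) (pull f12 nu eps zeta U)
           (pull f21 nu eps zeta U) (pull f22 nu eps zeta U)
           (pull f31 nu eps zeta U) (pull f32 nu eps zeta U)"
  unfolding structure_eqs_def
proof clarify
  fix x t
  assume xt: "(x, t) \<in> S"
  have Ux: "((\<lambda>y. U y t) has_real_derivative px U x t) (at x)"
    using smooth_on2_DERIV_px[OF U xt, of "[]"] by simp
  have Uxx: "((\<lambda>y. px U y t) has_real_derivative px (px U) x t) (at x)"
    using smooth_on2_DERIV_px[OF U xt, of "[True]"] by simp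
  have Uxxx: "((\<lambda>y. px (px U) y t) has_real_derivative px (px (px U)) x t) (at x)"
    using smooth_on2_DERIV_px[OF U xt, of "[True, True]"] by simp
  have Ut: "((\<lambda>s. U x s) has_real_derivative pt U x t) (at t)"
    using smooth_on2_DERIV_pt[OF U xt, of "[]"] by simp
  have Uxxt: "((\<lambda>s. px (px U) x s) has_real_derivative pt (px (px U)) x t) (at t)"
    using smooth_on2_DERIV_pt[OF U xt, of "[True, True]"] by simp
  have "eqE nu eps U x t"
    using E xt by auto
  then show "px (pull f12 nu eps zeta U) x t - pt (pull f11 nu eps zeta U) x t =
       pull f31 nu eps zeta U x t * pull f22 nu eps zeta U x t - pull f32 nu eps zeta U x t * pull f21 nu eps zeta U x t \<and>
       px (pull f22 nu eps zeta U) x t - pt (pull f21 nu eps zeta U) x t =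
       pull f11 nu eps zeta U x t * pull f32 nu eps zeta U x t - pull f12 nu eps zeta U x t * pull f31 nu eps zeta U x t \<and>
       px (pull f32 nu eps zeta U) x t - pt (pull f31 nu eps zeta U) x t =
       pull f11 nu eps zeta U x t * pull f22 nu eps zeta U x t - pull f12 nu eps zeta U x t * pull f21 nu eps zeta U x t"
    unfolding px_pull pt_pull pull_def
      deriv_f11_comp[OF Ut Uxxt] deriv_f12_comp[OF Ux Uxxx] deriv_f22_comp[OF Uxx]
      deriv_f31_comp[OF Ut Uxxt] deriv_f32_comp[OF Ux Uxxx]
      structure_eq1_jet_iff structure_eq3_jet_iff f11_f32_minus_f12_f31[OF nu nz]
    by (simp add: eqE_def Let_def f21_def)
qed

lemma f11_not_identically_zero: "\<exists>u ux uxx. f11 nu eps zeta u ux uxx \<noteq> 0"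
proof (rule ccontr)
  assume "\<not> ?thesis"
  then have "f11 nu eps zeta 0 0 0 = 0" "f11 nu eps zeta 0 0 1 = 0" "f11 nu eps zeta 1 0 0 = 0"
    by auto
  then have "nu^2 = 0" "eps = 0"
    unfolding f11_def by (simp_all add: algebra_simps)
  with \<open>f11 nu eps zeta 0 0 0 = 0\<close> show False
    unfolding f11_def by simp
qed

lemma f31_not_identically_zero: "\<exists>u ux uxx. f31 nu eps zeta u ux uxx \<noteq> 0"
proof (rule ccontr)
  assume "\<not> ?thesis"
  then have "f31 nu eps zeta 0 0 0 = 0" "f31 nu eps zeta 0 0 1 = 0" "f31 nu eps zeta 1 0 0 = 0"
    by auto
  then have "nu^2 = 0" "eps = 0"
    unfolding f31_def by (simp_all add: algebra_simps)
  with \<open>f31 nu eps zeta 0 0 0 = 0\<close> show False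
    unfolding f31_def by simp
qed

theorem corollary3:
  fixes nu eps zeta :: real
  assumes "nu \<ge> 0" and "eps \<in> {0, 1}" and "1 + zeta * nu^2 \<noteq> 0"
  shows "(\<forall>f\<in>{(f11, f12), (f21, f22), (f31, f32)}.
            \<exists>u ux uxx. (fst f) nu eps zeta u ux uxx \<noteq> 0 \<or> (snd f) nu eps zeta u ux uxx \<noteq> 0)
       \<and> (\<forall>(S :: (real \<times> real) set) U. open S \<longrightarrow> smooth_on2 S U \<longrightarrow>
            (\<forall>(x,t)\<in>S. eqE nu eps U x t) \<longrightarrow>
            structure_eqs S
              (pull f11 nu eps zeta U) (pull f12 nu eps zeta U)
              (pull f21 nu eps zeta U) (pull f22 nu eps zeta U)
              (pull f31 nu eps zeta U) (pull f32 nu eps zeta U))"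
proof -
  have "f22 nu eps zeta 0 1 0 \<noteq> 0"
    by (simp add: f22_def)
  then have "\<forall>f\<in>{(f11, f12), (f21, f22), (f31, f32)}.
      \<exists>u ux uxx. (fst f) nu eps zeta u ux uxx \<noteq> 0 \<or> (snd f) nu eps zeta u ux uxx \<noteq> 0"
    using f11_not_identically_zero f31_not_identically_zero by (simp; blast)
  with structure_eqs_pull_solution[OF assms(1,3)] show ?thesis
    by blast
qed

end
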